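(* Let $r\ge1$, $p_n\in[0,1]$, $L\ge1$, and $\mathbf s_1,\dots,\mathbf s_L\in V(G_n)_r$ with $a=|\bigcup_{j=1}^L\bar{\mathbf s}_j|$, and assume $\bar{\mathbf s}_i\cap\bigcup_{j\ne i}\bar{\mathbf s}_j\ne\emptyset$ for all $1\le i\le L$. Then $$\big|\mathbb E[Z_{\mathbf s_1}Z_{\mathbf s_2}\cdots Z_{\mathbf s_L}]-p_n^a\big|\le(2^L-1)p_n^{a+1}.$$ Moreover, for $L=2$, $\mathbb E[Z_{\mathbf s_1}Z_{\mathbf s_2}]\ge p_n^a(1-p_n)\ge0$.
   Context: $V(G_n)$ is a finite vertex set; $V(G_n)_r$ is the set of $r$-tuples of distinct elements, $\bar{\mathbf s}$ the set of entries of $\mathbf s$. $\{X_v\}_{v\in V(G_n)}$ are i.i.d. Bernoulli$(p_n)$, $X_{\mathbf s}=\prod_{u=1}^rX_{s_u}$, $Z_{\mathbf s}=X_{\mathbf s}-p_n^r$. *)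

theory Defs
  imports "HOL-Probability.Probability"
begin

text \<open>The i.i.d. Bernoulli(p) family {X_v} on the finite vertex set V, as a product pmf
  of configurations X :: 'a \<Rightarrow> bool (X v = True means X_v = 1; default False off V).\<close>
definition bern_field :: "'a set \<Rightarrow> real \<Rightarrow> ('a \<Rightarrow> bool) pmf" where
  "bern_field V p = Pi_pmf V False (\<lambda>_. bernoulli_pmf p)"

definition Xs :: "('a \<Rightarrow> bool) \<Rightarrow> 'a list \<Rightarrow> real" where
  "Xs X s = prod_list (map (\<lambda>v. of_bool (X v)) s)"

definition Zs :: "real \<Rightarrow> ('a \<Rightarrow> bool) \<Rightarrow> 'a list \<Rightarrow> real" where
  "Zs p X s = Xs X s - p ^ length s"

end

theory Submission
  imports Defs
begin

text \<open>Expanding \<open>\<Prod>j\<in>I. (X\<^sub>s\<^sub>j - p\<^sup>r)\<close> over the subsets \<open>S \<subseteq> I\<close> and using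
  \<open>\<Prod>j\<in>S. X\<^sub>s\<^sub>j = \<Prod>v\<in>\<Union>j\<in>S. s\<^sub>j. X\<^sub>v\<close> gives
  \<open>E[\<Prod>j\<in>I. Z\<^sub>s\<^sub>j] = \<Sum>S\<subseteq>I. p\<^bsup>|\<Union>j\<in>S. s\<^sub>j|\<^esup> (-p\<^sup>r)\<^bsup>|I - S|\<^esup>\<close>.
  The term \<open>S = I\<close> is \<open>p\<^sup>a\<close>. For a proper subset \<open>S\<close>, pick \<open>j\<^sub>0 \<in> I - S\<close>: since \<open>s\<^sub>j\<^sub>0\<close>
  meets the other tuples, the union of all tuples has fewer than
  \<open>|\<Union>j\<in>S. s\<^sub>j| + r |I - S|\<close> elements, so the term has modulus at most \<open>p\<^bsup>a+1\<^esup>\<close>;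
  there are \<open>2\<^sup>L - 1\<close> such terms. For two tuples the expansion is exact:
  \<open>E[Z\<^sub>s\<^sub>1 Z\<^sub>s\<^sub>2] = p\<^sup>a - p\<^bsup>2r\<^esup>\<close> with \<open>a < 2r\<close>.\<close>

lemma prod_of_bool_eq:
  "finite A \<Longrightarrow> (\<Prod>x\<in>A. (of_bool (P x) :: 'b :: comm_semiring_1)) = of_bool (\<forall>x\<in>A. P x)"
  by (induction A rule: finite_induct) auto

lemma Xs_eq_of_bool: "Xs X s = of_bool (\<forall>v\<in>set s. X v)"
  unfolding Xs_def by (induction s) auto

lemma Xs_append: "Xs X (t @ u) = Xs X t * Xs X u"
  unfolding Xs_def by simp

lemma prod_Xs_eq_of_bool_Union:
  "finite I \<Longrightarrow> (\<Prod>j\<in>I. Xs X (s j)) = of_bool (\<forall>v\<in>(\<Union>j\<in>I. set (s j)). X v)"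
  by (simp add: Xs_eq_of_bool prod_of_bool_eq)

lemma finite_set_pmf_bern_field: "finite V \<Longrightarrow> finite (set_pmf (bern_field V p))"
  unfolding bern_field_def by (rule finite_subset[OF set_Pi_pmf_subset']) auto

lemma integrable_bern_field:
  "finite V \<Longrightarrow> integrable (measure_pmf (bern_field V p)) (f :: _ \<Rightarrow> real)"
  by (rule integrable_measure_pmf_finite[OF finite_set_pmf_bern_field])

lemma expectation_bern_field_all:
  assumes "finite V" "A \<subseteq> V" "0 \<le> p" "p \<le> 1"
  shows "measure_pmf.expectation (bern_field V p) (\<lambda>X. of_bool (\<forall>v\<in>A. X v)) = p ^ card A"
proof -
  have "finite A" using assms(1,2) finite_subset by blast
  then have product_form:
    "of_bool (\<forall>v\<in>A. X v) = (\<Prod>v\<in>V. if v \<in> A then of_bool (X v) else (1 :: real))"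
    for X using assms(1,2) by (simp add: prod_of_bool_eq prod.If_cases Int_absorb1)
  have "measure_pmf.expectation (bern_field V p) (\<lambda>X. of_bool (\<forall>v\<in>A. X v) :: real)
      = measure_pmf.expectation (Pi_pmf V False (\<lambda>_. bernoulli_pmf p))
          (\<lambda>X. \<Prod>v\<in>V. if v \<in> A then of_bool (X v) else 1)"
    unfolding bern_field_def by (simp only: product_form)
  also have "\<dots> = (\<Prod>v\<in>V. measure_pmf.expectation (bernoulli_pmf p)
      (\<lambda>b. if v \<in> A then of_bool b else 1))"
    by (rule expectation_prod_Pi_pmf[where f = "\<lambda>v b. if v \<in> A then of_bool b else 1"])
      (auto intro: assms integrable_measure_pmf_finite)
  also have "\<dots> = (\<Prod>v\<in>V. if v \<in> A then p else 1)"
    using assms by (intro prod.cong) auto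
  also have "\<dots> = p ^ card A"
    using assms(1,2) by (simp add: prod.If_cases Int_absorb1)
  finally show ?thesis .
qed

lemma expectation_Xs:
  assumes "finite V" "set t \<subseteq> V" "0 \<le> p" "p \<le> 1"
  shows "measure_pmf.expectation (bern_field V p) (\<lambda>X. Xs X t) = p ^ card (set t)"
  using expectation_bern_field_all[OF assms] by (simp add: Xs_eq_of_bool)

lemma expectation_prod_Zs:
  assumes "finite V" "finite I" "0 \<le> p" "p \<le> 1" "\<forall>j\<in>I. set (s j) \<subseteq> V"
  shows "measure_pmf.expectation (bern_field V p) (\<lambda>X. \<Prod>j\<in>I. Zs p X (s j))
    = (\<Sum>S\<in>Pow I. p ^ card (\<Union>j\<in>S. set (s j)) * (\<Prod>j\<in>I - S. - (p ^ length (s j))))"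
proof -
  have expand: "(\<Prod>j\<in>I. Zs p X (s j))
      = (\<Sum>S\<in>Pow I. (\<Prod>j\<in>S. Xs X (s j)) * (\<Prod>j\<in>I - S. - (p ^ length (s j))))" for X
    unfolding Zs_def using prod_add[OF assms(2), of "\<lambda>j. Xs X (s j)" "\<lambda>j. - (p ^ length (s j))"]
    by simp
  have moment: "measure_pmf.expectation (bern_field V p) (\<lambda>X. \<Prod>j\<in>S. Xs X (s j))
      = p ^ card (\<Union>j\<in>S. set (s j))" if "S \<in> Pow I" for S
  proof -
    have "finite S" "(\<Union>j\<in>S. set (s j)) \<subseteq> V"
      using that assms(2,5) finite_subset by auto
    then show ?thesis
      unfolding prod_Xs_eq_of_bool_Union[OF \<open>finite S\<close>]
      using expectation_bern_field_all[OF assms(1) _ assms(3,4)] by blast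
  qed
  show ?thesis
    unfolding expand
    by (simp add: Bochner_Integration.integral_sum[OF integrable_bern_field[OF assms(1)]] moment)
qed

lemma card_Union_less_if_overlapping:
  assumes "finite I" and overlap: "\<forall>i\<in>I. set (s i) \<inter> (\<Union>j\<in>I - {i}. set (s j)) \<noteq> {}"
    and "S \<subset> I"
  shows "card (\<Union>j\<in>I. set (s j)) < card (\<Union>j\<in>S. set (s j)) + (\<Sum>j\<in>I - S. card (set (s j)))"
proof -
  obtain j0 where j0: "j0 \<in> I" "j0 \<notin> S" using \<open>S \<subset> I\<close> by auto
  define R where "R = (\<Union>j\<in>I - {j0}. set (s j))"
  have "finite R" unfolding R_def using \<open>finite I\<close> by auto
  have "(\<Union>j\<in>I. set (s j)) = set (s j0) \<union> R" using j0 unfolding R_def by auto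
  moreover have "card (set (s j0) \<union> R) < card (set (s j0)) + card R"
  proof -
    have "set (s j0) \<inter> R \<noteq> {}" using overlap j0 unfolding R_def by auto
    then have "card (set (s j0) \<inter> R) > 0" using \<open>finite R\<close> by (simp add: card_gt_0_iff)
    then show ?thesis using card_Un_Int[of "set (s j0)" R] \<open>finite R\<close> by simp
  qed
  moreover have "card R \<le> card (\<Union>j\<in>S. set (s j)) + (\<Sum>j\<in>I - S - {j0}. card (set (s j)))"
  proof -
    have "R = (\<Union>j\<in>S. set (s j)) \<union> (\<Union>j\<in>I - S - {j0}. set (s j))"
      using j0 \<open>S \<subset> I\<close> unfolding R_def by auto
    then have "card R \<le> card (\<Union>j\<in>S. set (s j)) + card (\<Union>j\<in>I - S - {j0}. set (s j))"
      by (simp add: card_Un_le)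
    also have "card (\<Union>j\<in>I - S - {j0}. set (s j)) \<le> (\<Sum>j\<in>I - S - {j0}. card (set (s j)))"
      using \<open>finite I\<close> by (intro card_UN_le) auto
    finally show ?thesis by simp
  qed
  moreover have "(\<Sum>j\<in>I - S. card (set (s j))) = card (set (s j0)) + (\<Sum>j\<in>I - S - {j0}. card (set (s j)))"
    using j0 \<open>finite I\<close> by (subst sum.remove[of _ j0]) auto
  ultimately show ?thesis by simp
qed

lemma expectation_prod_Zs_bound:
  assumes "finite V" "finite I" "0 \<le> p" "p \<le> 1"
    and tuples: "\<forall>j\<in>I. distinct (s j) \<and> set (s j) \<subseteq> V"
    and overlap: "\<forall>i\<in>I. set (s i) \<inter> (\<Union>j\<in>I - {i}. set (s j)) \<noteq> {}"
  defines "a \<equiv> card (\<Union>j\<in>I. set (s j))"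
  shows "\<bar>measure_pmf.expectation (bern_field V p) (\<lambda>X. \<Prod>j\<in>I. Zs p X (s j)) - p ^ a\<bar>
    \<le> (2 ^ card I - 1) * p ^ (a + 1)"
proof -
  define t where "t S = p ^ card (\<Union>j\<in>S. set (s j)) * (\<Prod>j\<in>I - S. - (p ^ length (s j)))" for S
  have "measure_pmf.expectation (bern_field V p) (\<lambda>X. \<Prod>j\<in>I. Zs p X (s j)) = (\<Sum>S\<in>Pow I. t S)"
    unfolding t_def using assms(1-4) tuples by (intro expectation_prod_Zs) auto
  also have "\<dots> = t I + (\<Sum>S\<in>Pow I - {I}. t S)"
    using \<open>finite I\<close> by (intro sum.remove) auto
  finally have "\<bar>measure_pmf.expectation (bern_field V p) (\<lambda>X. \<Prod>j\<in>I. Zs p X (s j)) - p ^ a\<bar>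
      = \<bar>\<Sum>S\<in>Pow I - {I}. t S\<bar>"
    unfolding t_def a_def by simp
  also have "\<dots> \<le> (\<Sum>S\<in>Pow I - {I}. \<bar>t S\<bar>)"
    by (rule sum_abs)
  also have "\<dots> \<le> (\<Sum>S\<in>Pow I - {I}. p ^ (a + 1))"
  proof (intro sum_mono)
    fix S assume "S \<in> Pow I - {I}"
    then have "S \<subset> I" by auto
    have lengths: "(\<Sum>j\<in>I - S. length (s j)) = (\<Sum>j\<in>I - S. card (set (s j)))"
      using tuples by (intro sum.cong) (auto simp: distinct_card)
    have "\<bar>t S\<bar> = p ^ (card (\<Union>j\<in>S. set (s j)) + (\<Sum>j\<in>I - S. length (s j)))"
      unfolding t_def using \<open>0 \<le> p\<close>
      by (simp add: abs_mult abs_prod power_abs power_add power_sum)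
    also have "\<dots> \<le> p ^ (a + 1)"
      using card_Union_less_if_overlapping[OF \<open>finite I\<close> overlap \<open>S \<subset> I\<close>] lengths assms(3,4)
      unfolding a_def by (intro power_decreasing) auto
    finally show "\<bar>t S\<bar> \<le> p ^ (a + 1)" .
  qed
  also have "\<dots> = (2 ^ card I - 1) * p ^ (a + 1)"
    using \<open>finite I\<close> by (simp add: card_Diff_singleton card_Pow)
  finally show ?thesis .
qed

lemma expectation_Zs_mult_Zs:
  assumes "finite V" "0 \<le> p" "p \<le> 1"
    and "distinct t" "distinct u" "set t \<subseteq> V" "set u \<subseteq> V"
  shows "measure_pmf.expectation (bern_field V p) (\<lambda>X. Zs p X t * Zs p X u)
    = p ^ card (set t \<union> set u) - p ^ (length t + length u)"
proof -
  have "(\<lambda>X. Zs p X t * Zs p X u)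
      = (\<lambda>X. Xs X (t @ u) - p ^ length u * Xs X t - p ^ length t * Xs X u + p ^ (length t + length u))"
    unfolding Zs_def Xs_append by (auto simp: algebra_simps power_add)
  then show ?thesis
    using assms expectation_Xs[OF assms(1) _ assms(2,3)]
    by (simp add: integrable_bern_field distinct_card power_add)
qed

lemma expectation_Zs_mult_Zs_ge:
  assumes "finite V" "0 \<le> p" "p \<le> 1"
    and "distinct t" "distinct u" "set t \<subseteq> V" "set u \<subseteq> V" "set t \<inter> set u \<noteq> {}"
  shows "measure_pmf.expectation (bern_field V p) (\<lambda>X. Zs p X t * Zs p X u)
    \<ge> p ^ card (set t \<union> set u) * (1 - p)"
proof -
  have "card (set t \<union> set u) < length t + length u"
    using card_Un_Int[of "set t" "set u"] \<open>set t \<inter> set u \<noteq> {}\<close> assms(4,5)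
    by (simp add: distinct_card card_gt_0_iff)
  then have "p ^ (length t + length u) \<le> p ^ (card (set t \<union> set u) + 1)"
    using assms(2,3) by (intro power_decreasing) auto
  then show ?thesis
    unfolding expectation_Zs_mult_Zs[OF assms(1-7)] by (simp add: algebra_simps)
qed

theorem lemma4p1:
  fixes V :: "'a set" and p :: real and r L :: nat and s :: "nat \<Rightarrow> 'a list"
  assumes "finite V"
    and "r \<ge> 1" and "0 \<le> p" and "p \<le> 1" and "L \<ge> 1"
    and "\<forall>j<L. length (s j) = r \<and> distinct (s j) \<and> set (s j) \<subseteq> V"
    and "\<forall>i<L. set (s i) \<inter> (\<Union>j\<in>{..<L} - {i}. set (s j)) \<noteq> {}"
  shows "\<bar>measure_pmf.expectation (bern_field V p) (\<lambda>X. \<Prod>j<L. Zs p X (s j))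
            - p ^ card (\<Union>j<L. set (s j))\<bar>
           \<le> (2 ^ L - 1) * p ^ (card (\<Union>j<L. set (s j)) + 1)
         \<and> (L = 2 \<longrightarrow>
           measure_pmf.expectation (bern_field V p) (\<lambda>X. Zs p X (s 0) * Zs p X (s 1))
             \<ge> p ^ card (\<Union>j<L. set (s j)) * (1 - p)
         \<and> p ^ card (\<Union>j<L. set (s j)) * (1 - p) \<ge> 0)"
proof -
  have bound: "\<bar>measure_pmf.expectation (bern_field V p) (\<lambda>X. \<Prod>j<L. Zs p X (s j))
      - p ^ card (\<Union>j<L. set (s j))\<bar> \<le> (2 ^ L - 1) * p ^ (card (\<Union>j<L. set (s j)) + 1)"
  proof -
    have "\<forall>j\<in>{..<L}. distinct (s j) \<and> set (s j) \<subseteq> V"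
      using assms(6) by simp
    moreover have "\<forall>i\<in>{..<L}. set (s i) \<inter> (\<Union>j\<in>{..<L} - {i}. set (s j)) \<noteq> {}"
      using assms(7) by simp
    ultimately show ?thesis
      using expectation_prod_Zs_bound[OF assms(1) finite_lessThan assms(3,4)]
      unfolding card_lessThan by blast
  qed
  have pair: "measure_pmf.expectation (bern_field V p) (\<lambda>X. Zs p X (s 0) * Zs p X (s 1))
      \<ge> p ^ card (\<Union>j<L. set (s j)) * (1 - p)" if "L = 2"
  proof -
    have indices: "{..<L} = {0, 1}" "{..<L} - {0} = {1}"
      using that by auto
    have "distinct (s 0)" "set (s 0) \<subseteq> V" "distinct (s 1)" "set (s 1) \<subseteq> V"
      using assms(6) that by simp_all
    moreover have "set (s 0) \<inter> set (s 1) \<noteq> {}"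
      using assms(7)[rule_format, of 0] that unfolding indices(2) by simp
    ultimately have "measure_pmf.expectation (bern_field V p) (\<lambda>X. Zs p X (s 0) * Zs p X (s 1))
        \<ge> p ^ card (set (s 0) \<union> set (s 1)) * (1 - p)"
      by (intro expectation_Zs_mult_Zs_ge assms(1,3,4))
    then show ?thesis
      by (simp add: indices(1))
  qed
  show ?thesis using bound pair assms(3,4) by simp
qed

end
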